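(* (Hammock Lemma) Let $\tilde f,f,g\in\breve{\mathcal D}$ and $c:=\int f/\int g$ satisfy $g\lhd f$, $\tilde f\le f$ and $\tilde f(x)\le\tilde g(x):=g(x/c)$ for all $x\in[0,1]$. Then $\int Tf-\int Tg<1-\int\tilde f/\int f$.
   Context: $\int f:=\int_0^1f(x)\,dx$. $\breve{\mathcal D}$: the set of continuous, convex, strictly decreasing $f\colon[0,1]\to[0,1]$ with $f(0)=1$, $f(1)=0$; for such $f$, $f^*=f^{-1}$ and $(Tf)(x):=\frac{\int_x^1f^{-1}}{\int f}$. For $f$ and $a>0$, $f_{[a]}(x):=f(ax)$ on $[0,\frac1a]$; for $b>0$, $f_{[a]}-bg$ is considered on $[0,\min\{1,\frac1a\}]$. Sign switches: for continuous $\Delta\colon[c_0,d_0]\to\mathbb R$, a closed subinterval $[c',d']$ with $c_0<c'\le d'<d_0$ and $\Delta([c',d'])=\{0\}$ is a sign switch if there is $\delta\in(0,\min\{c'-c_0,d_0-d'\}]$ with $\Delta(c'-x)\Delta(d'+x)<0$ for all $x\in(0,\delta]$; $\chi\Delta$ is their number. Crossing number $\chi(f,g):=\sup\{\chi(f_{[a]}-bg):a,b>0\}$. Domination $g\lhd f$: $\chi(f,g)=2$ and $g\le f$ pointwise. *)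

theory Defs
  imports "HOL-Analysis.Analysis" "HOL-Library.Extended_Nat"
begin

definition int01 :: "(real \<Rightarrow> real) \<Rightarrow> real" where
  "int01 f = integral {0..1} f"

definition Dbreve :: "(real \<Rightarrow> real) \<Rightarrow> bool" where
  "Dbreve f \<longleftrightarrow> continuous_on {0..1} f \<and> convex_on {0..1} f
     \<and> (\<forall>x\<in>{0..1}. \<forall>y\<in>{0..1}. x < y \<longrightarrow> f y < f x)
     \<and> f ` {0..1} \<subseteq> {0..1} \<and> f 0 = 1 \<and> f 1 = 0"

definition finv :: "(real \<Rightarrow> real) \<Rightarrow> real \<Rightarrow> real" where
  "finv f = inv_into {0..1} f"

definition Top :: "(real \<Rightarrow> real) \<Rightarrow> real \<Rightarrow> real" where
  "Top f x = integral {x..1} (finv f) / int01 f"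

definition sign_switch :: "(real \<Rightarrow> real) \<Rightarrow> real \<Rightarrow> real \<Rightarrow> real \<times> real \<Rightarrow> bool" where
  "sign_switch \<Delta> c0 d0 p \<longleftrightarrow> (case p of (c', d') \<Rightarrow>
     c0 < c' \<and> c' \<le> d' \<and> d' < d0 \<and> (\<forall>x\<in>{c'..d'}. \<Delta> x = 0) \<and>
     (\<exists>\<delta>>0. \<delta> \<le> min (c' - c0) (d0 - d') \<and>
        (\<forall>x\<in>{0<..\<delta>}. \<Delta> (c' - x) * \<Delta> (d' + x) < 0)))"

definition nswitch :: "(real \<Rightarrow> real) \<Rightarrow> real \<Rightarrow> real \<Rightarrow> enat" where
  "nswitch \<Delta> c0 d0 =
     (if finite {p. sign_switch \<Delta> c0 d0 p} then enat (card {p. sign_switch \<Delta> c0 d0 p}) else \<infinity>)"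

definition crossing :: "(real \<Rightarrow> real) \<Rightarrow> (real \<Rightarrow> real) \<Rightarrow> enat" where
  "crossing f g = (SUP p\<in>{p. fst p > 0 \<and> snd p > 0}.
       nswitch (\<lambda>x. f (fst p * x) - snd p * g x) 0 (min 1 (1 / fst p)))"

definition dominated :: "(real \<Rightarrow> real) \<Rightarrow> (real \<Rightarrow> real) \<Rightarrow> bool" where
  "dominated g f \<longleftrightarrow> crossing f g = 2 \<and> (\<forall>x\<in>{0..1}. g x \<le> f x)"

end

theory Submission
  imports Defs
begin

(* Writing the integral of f^-1 over [x,1] as the integral over y in [0,1] of max (f y - x) 0
   and exchanging the two integrations gives  int (T f) = int (f^2/2) / int f.  With
   c = int f / int g >= 1 (because g <= f), the substitution x = c y gives
   c * int (g^2/2) = integral over [0,c] of g(x/c)^2/2.  Since ft <= min f (g(./c)) and all values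
   lie in [0,1], we have f^2/2 - g(./c)^2/2 <= f - ft on [0,1], so after integrating the claim
   reduces to the positivity of the integral of g(x/c)^2/2 over [1,c], that is, to c > 1.

   If c = 1 then g = f, and domination would give chi(f,f) = 2.  But for a fixed dilation a the
   ratio f(a x)/f(x) (or its reciprocal) either is monotone, and then every f(a.) - b f has at most
   one sign switch, or it is not, and then some value b is attained three times with non-zero
   derivative, giving three sign switches.  Such a regular value exists by Sard's lemma, since a
   convex function is differentiable outside a countable set. *)

lemma negligible_image_zero_derivative:
  fixes \<rho> :: "real \<Rightarrow> real"
  assumes "\<And>x. x \<in> S \<Longrightarrow> (\<rho> has_real_derivative 0) (at x within S)"
  shows "negligible (\<rho> ` S)"
proof -
  \<comment> \<open>The library's Sard lemma \<open>baby_Sard\<close> is stated for maps between spaces \<open>real^'n\<close>.\<close>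
  define F :: "real^1 \<Rightarrow> real^1" where "F v = vec (\<rho> (v$1))" for v
  have der: "(F has_derivative (\<lambda>h. 0)) (at v within vec ` S)" if "v \<in> vec ` S" for v
  proof -
    obtain x where x: "x \<in> S" "v = vec x" using \<open>v \<in> vec ` S\<close> by auto
    have "(\<lambda>h. h * (\<lambda>_::real. 0::real) x) = (*) 0" "((*\<^sub>R) 0 :: real^1 \<Rightarrow> real^1) = (\<lambda>h. 0)"
      by auto
    then show ?thesis
      using has_derivative_vector_1[of \<rho> "\<lambda>_. 0" x S] assms[OF x(1)]
      unfolding F_def x by (simp add: has_field_derivative_def)
  qed
  have "negligible (F ` vec ` S)"
    by (rule baby_Sard[OF _ der]) (simp_all add: matrix_def rank_0 flip: zero_vec_def)
  moreover have "F ` vec ` S = vec ` \<rho> ` S"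
    unfolding F_def by (auto simp: image_image)
  ultimately have "negligible (vec ` \<rho> ` S :: (real^1) set)"
    by simp
  then have "negligible ((\<lambda>v::real^1. v$1) ` vec ` \<rho> ` S)"
    by (rule negligible_differentiable_image_negligible[rotated])
       (auto intro!: bounded_linear_imp_differentiable_on bounded_linear_vec_nth)
  then show ?thesis by (simp add: image_image)
qed

lemma negligible_countable:
  fixes A :: "'a::euclidean_space set"
  assumes "countable A"
  shows "negligible A"
  using negligible_countable_Union[of "(\<lambda>x. {x}) ` A"] assms by auto

lemma regular_value_between:
  fixes \<rho> :: "real \<Rightarrow> real"
  assumes K: "countable K" and diff: "\<And>x. x \<in> S - K \<Longrightarrow> \<rho> differentiable (at x)"
    and "y1 < y2"
  obtains b where "y1 < b" "b < y2"
    and "\<And>z. z \<in> S \<Longrightarrow> \<rho> z = b \<Longrightarrow> \<exists>d. (\<rho> has_real_derivative d) (at z) \<and> d \<noteq> 0"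
proof -
  define Crit where "Crit = {x \<in> S - K. (\<rho> has_real_derivative 0) (at x)}"
  have "negligible (\<rho> ` (S \<inter> K) \<union> \<rho> ` Crit)"
  proof (rule negligible_Un)
    show "negligible (\<rho> ` (S \<inter> K))"
      using K by (intro negligible_countable) auto
    show "negligible (\<rho> ` Crit)"
      by (rule negligible_image_zero_derivative) (auto simp: Crit_def has_field_derivative_at_within)
  qed
  moreover have "\<not> negligible {y1<..<y2}"
    using negligible_interval(2)[of y1 y2] \<open>y1 < y2\<close> by simp
  ultimately obtain b where b: "b \<in> {y1<..<y2}" "b \<notin> \<rho> ` (S \<inter> K) \<union> \<rho> ` Crit"
    by (meson negligible_subset subsetI)
  have "\<exists>d. (\<rho> has_real_derivative d) (at z) \<and> d \<noteq> 0" if "z \<in> S" "\<rho> z = b" for z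
  proof -
    have "z \<in> S - K" "z \<notin> Crit" using b that by auto
    then show ?thesis
      using diff[of z] unfolding Crit_def by (auto simp: real_differentiable_def)
  qed
  with b that show ?thesis by auto
qed

lemma sign_change_of_nonzero_derivative:
  fixes \<rho> :: "real \<Rightarrow> real"
  assumes "(\<rho> has_real_derivative d) (at z)" "d \<noteq> 0"
  obtains r where "r > 0" "\<And>h. 0 < h \<Longrightarrow> h < r \<Longrightarrow> (\<rho> (z - h) - \<rho> z) * (\<rho> (z + h) - \<rho> z) < 0"
proof (cases "d > 0")
  case True
  obtain r1 r2 where "r1 > 0" "\<forall>h>0. h < r1 \<longrightarrow> \<rho> (z - h) < \<rho> z"
    and "r2 > 0" "\<forall>h>0. h < r2 \<longrightarrow> \<rho> z < \<rho> (z + h)"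
    using DERIV_pos_inc_left[OF assms(1) True] DERIV_pos_inc_right[OF assms(1) True] by blast
  then show ?thesis
    by (intro that[of "min r1 r2"]) (auto simp: mult_less_0_iff)
next
  case False
  then have "d < 0" using assms(2) by simp
  obtain r1 r2 where "r1 > 0" "\<forall>h>0. h < r1 \<longrightarrow> \<rho> z < \<rho> (z - h)"
    and "r2 > 0" "\<forall>h>0. h < r2 \<longrightarrow> \<rho> (z + h) < \<rho> z"
    using DERIV_neg_dec_left[OF assms(1) \<open>d < 0\<close>] DERIV_neg_dec_right[OF assms(1) \<open>d < 0\<close>] by blast
  then show ?thesis
    by (intro that[of "min r1 r2"]) (auto simp: mult_less_0_iff)
qed

lemma three_crossings:
  fixes \<rho> :: "real \<Rightarrow> real"
  assumes "continuous_on {c..d} \<rho>" "c \<le> x1" "x1 \<le> x2" "x2 \<le> d"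
    and "\<rho> d < b" "\<rho> x1 < b" "b < \<rho> x2" "b < \<rho> c"
  obtains z1 z2 z3 where "c < z1" "z1 < x1" "x1 < z2" "z2 < x2" "x2 < z3" "z3 < d"
    and "\<rho> z1 = b" "\<rho> z2 = b" "\<rho> z3 = b"
proof -
  have cont: "continuous_on {c..x1} \<rho>" "continuous_on {x1..x2} \<rho>" "continuous_on {x2..d} \<rho>"
    using assms(1-4) by (auto elim: continuous_on_subset)
  obtain z1 where z1: "c \<le> z1" "z1 \<le> x1" "\<rho> z1 = b"
    using IVT2'[of \<rho> x1 b c, OF _ _ _ cont(1)] assms by auto
  obtain z2 where z2: "x1 \<le> z2" "z2 \<le> x2" "\<rho> z2 = b"
    using IVT'[of \<rho> x1 b x2, OF _ _ _ cont(2)] assms by auto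
  obtain z3 where z3: "x2 \<le> z3" "z3 \<le> d" "\<rho> z3 = b"
    using IVT2'[of \<rho> d b x2, OF _ _ _ cont(3)] assms by auto
  have "c < z1" "z1 < x1" "x1 < z2" "z2 < x2" "x2 < z3" "z3 < d"
    using z1 z2 z3 assms(5-8) by (auto simp: order.order_iff_strict)
  with z1 z2 z3 that show ?thesis by blast
qed

lemma convex_on_slope_mono:
  fixes f :: "real \<Rightarrow> real"
  assumes f: "convex_on I f" and I: "x \<in> I" "u \<in> I" "v \<in> I"
    and "u < v" "u \<noteq> x" "v \<noteq> x"
  shows "(f u - f x) / (u - x) \<le> (f v - f x) / (v - x)"
proof -
  have swap: "(f p - f q) / (p - q) = (f q - f p) / (q - p)" for p q
    by (metis minus_diff_eq minus_divide_divide)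
  consider "u < v" "v < x" | "u < x" "x < v" | "x < u" "u < v"
    using assms by linarith
  then show ?thesis
  proof cases
    case 1
    then show ?thesis using convex_on_slope_le(2)[OF f I(2,1), of v] swap by simp
  next
    case 2
    then show ?thesis
      using convex_on_slope_le[OF f I(2,3) 2] swap by (metis order.trans)
  next
    case 3
    then show ?thesis using convex_on_slope_le(1)[OF f I(1,3) 3] swap by simp
  qed
qed

lemma convex_on_differentiable_if_slopes_meet:
  fixes f :: "real \<Rightarrow> real"
  assumes f: "convex_on {a..b} f" and x: "a < x" "x < b"
    and meet: "(SUP u\<in>{a..<x}. (f u - f x) / (u - x)) = (INF v\<in>{x<..b}. (f v - f x) / (v - x))"
  shows "f differentiable (at x)"
proof -
  define q where "q y = (f y - f x) / (y - x)" for y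
  define D where "D = (INF v\<in>{x<..b}. q v)"
  have q_mono: "q u \<le> q v" if "u \<in> {a..b}" "v \<in> {a..b}" "u < v" "u \<noteq> x" "v \<noteq> x" for u v
    unfolding q_def by (rule convex_on_slope_mono[OF f]) (use that x in auto)
  have "(q \<longlongrightarrow> D) (at x)"
  proof (rule tendstoI)
    fix e :: real assume "e > 0"
    have "bdd_above (q ` {a..<x})"
      by (rule bdd_aboveI2[where M="q b"]) (use q_mono x in auto)
    then obtain u where u: "u \<in> {a..<x}" "D - e < q u"
      using less_cSUP_iff[of "{a..<x}" q "D - e"] meet \<open>e > 0\<close> x unfolding q_def D_def by auto
    have "bdd_below (q ` {x<..b})"
      by (rule bdd_belowI2[where m="q a"]) (use q_mono x in auto)
    then obtain v where v: "v \<in> {x<..b}" "q v < D + e"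
      using cINF_less_iff[of "{x<..b}" q "D + e"] \<open>e > 0\<close> x unfolding D_def by auto
    have "dist (q y) D < e" if "y \<noteq> x" "dist y x < min (v - x) (x - u)" for y
    proof -
      have "u < y" "y < v" using that by (auto simp: dist_real_def)
      then have "q u \<le> q y" "q y \<le> q v" using q_mono u v x that(1) by auto
      then show ?thesis using u v by (auto simp: dist_real_def)
    qed
    then show "\<forall>\<^sub>F y in at x. dist (q y) D < e"
      unfolding eventually_at using u v by (intro exI[of _ "min (v - x) (x - u)"]) auto
  qed
  then have "(f has_real_derivative D) (at x)"
    unfolding q_def by (simp add: has_field_derivative_iff)
  then show ?thesis by (auto simp: real_differentiable_def)
qed

lemma countable_nondifferentiable_convex_on:
  fixes f :: "real \<Rightarrow> real"
  assumes f: "convex_on {a..b} f"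
  shows "countable {x\<in>{a<..<b}. \<not> f differentiable (at x)}"
proof -
  define q where "q x y = (f y - f x) / (y - x)" for x y
  define L where "L x = (SUP u\<in>{a..<x}. q x u)" for x
  define R where "R x = (INF v\<in>{x<..b}. q x v)" for x
  define N where "N = {x\<in>{a<..<b}. \<not> f differentiable (at x)}"
  have q_mono: "q x u \<le> q x v"
    if "x \<in> {a..b}" "u \<in> {a..b}" "v \<in> {a..b}" "u < v" "u \<noteq> x" "v \<noteq> x" for x u v
    unfolding q_def by (rule convex_on_slope_mono[OF f]) (use that in auto)
  have q_sym: "q x y = q y x" for x y
    unfolding q_def by (metis minus_diff_eq minus_divide_divide)
  have L_ge: "q x u \<le> L x" if "a \<le> u" "u < x" "x < b" for x u
    unfolding L_def
    by (rule cSUP_upper, use that in simp, rule bdd_aboveI2[where M="q x b"]) (use q_mono that in auto)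
  have R_le: "R x \<le> q x v" if "a < x" "x < v" "v \<le> b" for x v
    unfolding R_def
    by (rule cINF_lower, use that in simp, rule bdd_belowI2[where m="q x a"]) (use q_mono that in auto)
  have L_less_R: "L x < R x" if "x \<in> N" for x
  proof -
    have x: "a < x" "x < b" using that unfolding N_def by auto
    have "L x \<le> R x"
      unfolding L_def R_def using x by (intro cSUP_least cINF_greatest) (auto intro!: q_mono)
    moreover have "L x \<noteq> R x"
      using convex_on_differentiable_if_slopes_meet[OF f x] that unfolding N_def L_def R_def q_def by auto
    ultimately show ?thesis by simp
  qed
  have R_le_L: "R x \<le> L y" if "x \<in> N" "y \<in> N" "x < y" for x y
    using R_le[of x y] L_ge[of x y] q_sym that unfolding N_def by auto
  \<comment> \<open>The intervals from \<open>L x\<close> to \<open>R x\<close>, \<open>x \<in> N\<close>, are nonempty and pairwise disjoint.\<close>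
  define r where "r x = (SOME r::rat. L x < of_rat r \<and> of_rat r < R x)" for x
  have r: "L x < of_rat (r x) \<and> of_rat (r x) < R x" if "x \<in> N" for x
    unfolding r_def by (rule someI_ex) (use of_rat_dense L_less_R[OF that] in blast)
  have "inj_on r N"
  proof (rule inj_onI, rule ccontr)
    fix x y assume "x \<in> N" "y \<in> N" "r x = r y" "x \<noteq> y"
    then show False
      using R_le_L[of x y] R_le_L[of y x] r[of x] r[of y] by (cases "x < y") auto
  qed
  then show ?thesis
    unfolding N_def[symmetric] by (rule countableI')
qed

lemma integral_max_diff_0:
  fixes c :: real
  assumes "0 \<le> c" "c \<le> 1"
  shows "integral {0..1} (\<lambda>x. max (c - x) 0) = c\<^sup>2 / 2"
proof -
  have "((\<lambda>x. c - x) has_integral (c * c - c\<^sup>2 / 2) - (c * 0 - 0\<^sup>2 / 2)) {0..c}"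
    using assms(1) by (intro fundamental_theorem_of_calculus)
      (auto simp flip: has_real_derivative_iff_has_vector_derivative intro!: derivative_eq_intros)
  then have "integral {0..c} (\<lambda>x. c - x) = c\<^sup>2 / 2"
    by (simp add: integral_unique power2_eq_square)
  moreover have "integral {0..c} (\<lambda>x. max (c - x) 0) + integral {c..1} (\<lambda>x. max (c - x) 0) =
      integral {0..1} (\<lambda>x. max (c - x) 0)"
    using assms by (intro Henstock_Kurzweil_Integration.integral_combine integrable_continuous_interval
        continuous_intros) auto
  moreover have "integral {0..c} (\<lambda>x. max (c - x) 0) = integral {0..c} (\<lambda>x. c - x)"
    by (rule integral_cong) auto
  moreover have "integral {c..1} (\<lambda>x. max (c - x) 0) = 0"
    by (subst integral_cong[of _ _ "\<lambda>_. 0"]) auto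
  ultimately show ?thesis by simp
qed

lemma integral_deviation_le:
  fixes f :: "real \<Rightarrow> real"
  assumes "f integrable_on {s..s'}" "s \<le> s'"
    and "\<And>y. y \<in> {s..s'} \<Longrightarrow> m \<le> f y \<and> f y \<le> M" and "m \<le> v" "v \<le> M"
  shows "\<bar>integral {s..s'} f - v * (s' - s)\<bar> \<le> (M - m) * (s' - s)"
proof -
  have "integral {s..s'} f - v * (s' - s) = integral {s..s'} (\<lambda>y. f y - v)"
    using assms(2)
    by (subst Henstock_Kurzweil_Integration.integral_diff[OF assms(1) integrable_const_ivl]) simp
  also have "\<bar>\<dots>\<bar> \<le> (M - m) * measure lborel {s..s'}"
    using Henstock_Kurzweil_Integration.integrable_bound[of "M - m" "\<lambda>y. f y - v" s s'] assms
    by (force intro: integrable_diff)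
  finally show ?thesis using assms(2) by simp
qed

lemma integral_pos_if_continuous_nonneg:
  fixes h :: "real \<Rightarrow> real"
  assumes h: "continuous_on {a..b} h" "\<And>x. x \<in> {a..b} \<Longrightarrow> 0 \<le> h x"
    and "a < b" "x0 \<in> {a..b}" "h x0 > 0"
  shows "integral {a..b} h > 0"
proof -
  have int: "(h has_integral integral {a..b} h) (cbox a b)"
    using integrable_integral[OF integrable_continuous_interval[OF h(1)]] by (simp add: cbox_interval)
  have "integral {a..b} h \<noteq> 0"
  proof
    assume "integral {a..b} h = 0"
    then have "h x0 = 0"
      using has_integral_0_cbox_imp_0[of a b h x0] int h assms(3,4) by (auto simp: box_real)
    with assms(5) show False by simp
  qed
  moreover have "integral {a..b} h \<ge> 0"
    using h by (intro integral_nonneg integrable_continuous_interval) auto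
  ultimately show ?thesis by simp
qed

lemma integral_dilate_unit_interval:
  fixes h :: "real \<Rightarrow> real"
  assumes "h integrable_on {0..1}" "c > 0"
  shows "integral {0..c} (\<lambda>x. h (x / c)) = c * integral {0..1} h"
proof -
  have "((\<lambda>x. h ((1 / c) *\<^sub>R x + 0)) has_integral (integral {0..1} h /\<^sub>R (1 / c) ^ DIM(real)))
      (cbox ((0 - 0) /\<^sub>R (1 / c)) ((1 - 0) /\<^sub>R (1 / c)))"
    using assms by (intro has_integral_affinity') (auto simp: cbox_interval)
  then show ?thesis
    using assms(2) by (simp add: integral_unique cbox_interval)
qed

lemma half_square_diff_le:
  fixes u v w :: real
  assumes "0 \<le> u" "u \<le> 1" "0 \<le> v" "v \<le> 1" "w \<le> u" "w \<le> v"
  shows "u\<^sup>2 / 2 - v\<^sup>2 / 2 \<le> u - w"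
proof (cases "v \<le> u")
  case True
  have "u\<^sup>2 - v\<^sup>2 = (u - v) * (u + v)"
    by (simp add: power2_eq_square algebra_simps)
  also have "\<dots> \<le> (u - v) * 2"
    using True assms by (intro mult_left_mono) auto
  finally show ?thesis using assms by simp
next
  case False
  then have "u\<^sup>2 \<le> v\<^sup>2"
    using assms by (intro power_mono) auto
  then show ?thesis using assms(5) by linarith
qed

section \<open>Sign switches\<close>

lemma sign_switch_cong:
  assumes "\<And>x. x \<in> {c0..d0} \<Longrightarrow> D x = D' x"
  shows "sign_switch D c0 d0 = sign_switch D' c0 d0"
proof -
  have "sign_switch D' c0 d0 (c, d)"
    if sw: "sign_switch D c0 d0 (c, d)" and eq: "\<And>x. x \<in> {c0..d0} \<Longrightarrow> D x = D' x" for D D' c d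
  proof -
    obtain \<delta> where "c0 < c" "c \<le> d" "d < d0" "\<forall>x\<in>{c..d}. D x = 0" "\<delta> > 0"
      "\<delta> \<le> min (c - c0) (d0 - d)" "\<forall>x\<in>{0<..\<delta>}. D (c - x) * D (d + x) < 0"
      using sw unfolding sign_switch_def prod.case by blast
    with eq show ?thesis
      unfolding sign_switch_def by (auto intro!: exI[of _ \<delta>])
  qed
  with assms show ?thesis
    by (intro ext) (metis surj_pair)
qed

lemma nswitch_cong:
  assumes "\<And>x. x \<in> {c0..d0} \<Longrightarrow> D x = D' x"
  shows "nswitch D c0 d0 = nswitch D' c0 d0"
  using sign_switch_cong[OF assms] unfolding nswitch_def by simp

lemma nswitch_cmult:
  assumes "k \<noteq> 0"
  shows "nswitch (\<lambda>x. k * D x) c0 d0 = nswitch D c0 d0"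
proof -
  have "k * D u * (k * D v) < 0 \<longleftrightarrow> D u * D v < 0" for u v
  proof -
    have "k * D u * (k * D v) = (k * k) * (D u * D v)" by (simp add: algebra_simps)
    moreover have "k * k > 0" using assms by (auto simp: zero_less_mult_iff linorder_neq_iff)
    ultimately show ?thesis by (metis mult_less_cancel_left_pos mult_zero_right)
  qed
  then have "sign_switch (\<lambda>x. k * D x) c0 d0 p = sign_switch D c0 d0 p" for p
    using assms unfolding sign_switch_def by (cases p) simp
  then have "sign_switch (\<lambda>x. k * D x) c0 d0 = sign_switch D c0 d0" ..
  then show ?thesis unfolding nswitch_def by simp
qed

lemma sign_switch_endpoints:
  assumes "sign_switch D c0 d0 (c, d)"
  shows "c0 < c" "c \<le> d" "d < d0" "D c = 0" "D d = 0"
proof -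
  have "c0 < c \<and> c \<le> d \<and> d < d0 \<and> (\<forall>x\<in>{c..d}. D x = 0)"
    using assms unfolding sign_switch_def prod.case by blast
  then show "c0 < c" "c \<le> d" "d < d0" "D c = 0" "D d = 0"
    by auto
qed

lemma sign_switch_bounds_zeros:
  assumes switch: "sign_switch D c0 d0 (c, d)"
    and zeros: "\<And>x y z. c0 < x \<Longrightarrow> x \<le> z \<Longrightarrow> z \<le> y \<Longrightarrow> y < d0 \<Longrightarrow>
      D x = 0 \<Longrightarrow> D y = 0 \<Longrightarrow> D z = 0"
    and z: "c0 < z" "z < d0" "D z = 0"
  shows "c \<le> z \<and> z \<le> d"
proof -
  obtain \<delta> where sw: "c0 < c" "c \<le> d" "d < d0" "\<forall>x\<in>{c..d}. D x = 0" "\<delta> > 0"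
    "\<forall>x\<in>{0<..\<delta>}. D (c - x) * D (d + x) < 0"
    using switch unfolding sign_switch_def prod.case by blast
  show ?thesis
  proof (rule conjI; rule ccontr)
    assume "\<not> c \<le> z"
    define h where "h = min \<delta> (c - z)"
    have "D (c - h) = 0"
      by (rule zeros[where x=z and y=c]) (use \<open>\<not> c \<le> z\<close> z sw in \<open>auto simp: h_def\<close>)
    moreover have "D (c - h) * D (d + h) < 0"
      using sw(5,6) \<open>\<not> c \<le> z\<close> unfolding h_def by auto
    ultimately show False by simp
  next
    assume "\<not> z \<le> d"
    define h where "h = min \<delta> (z - d)"
    have "D (d + h) = 0"
      by (rule zeros[where x=d and y=z]) (use \<open>\<not> z \<le> d\<close> z sw in \<open>auto simp: h_def\<close>)
    moreover have "D (c - h) * D (d + h) < 0"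
      using sw(5,6) \<open>\<not> z \<le> d\<close> unfolding h_def by auto
    ultimately show False by simp
  qed
qed

lemma nswitch_le_1_if_unique:
  assumes "\<And>p p'. sign_switch D c0 d0 p \<Longrightarrow> sign_switch D c0 d0 p' \<Longrightarrow> p = p'"
  shows "nswitch D c0 d0 \<le> 1"
proof -
  define S where "S = {p. sign_switch D c0 d0 p}"
  have "S = {} \<or> (\<exists>p. S = {p})"
    using assms unfolding S_def by blast
  then have "finite S" "card S \<le> 1"
    by auto
  then show ?thesis
    unfolding nswitch_def S_def[symmetric] by (simp add: one_enat_def)
qed

lemma nswitch_le_1_if_zeros_order_convex:
  assumes "\<And>x y z. c0 < x \<Longrightarrow> x \<le> z \<Longrightarrow> z \<le> y \<Longrightarrow> y < d0 \<Longrightarrow>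
    D x = 0 \<Longrightarrow> D y = 0 \<Longrightarrow> D z = 0"
  shows "nswitch D c0 d0 \<le> 1"
proof -
  have bounds: "c \<le> z \<and> z \<le> d"
    if "sign_switch D c0 d0 (c, d)" "c0 < z" "z < d0" "D z = 0" for c d z
    by (rule sign_switch_bounds_zeros[OF that(1) _ that(2-4)]; rule assms; assumption)
  show ?thesis
  proof (rule nswitch_le_1_if_unique)
    fix p p' assume sw: "sign_switch D c0 d0 p" "sign_switch D c0 d0 p'"
    obtain c d c' d' where p: "p = (c, d)" "p' = (c', d')" by fastforce
    note sign_switch_endpoints[OF sw(1)[unfolded p]] sign_switch_endpoints[OF sw(2)[unfolded p]]
    then have "c \<le> c'" "d' \<le> d" "c' \<le> c" "d \<le> d'"
      using bounds[OF sw(1)[unfolded p], of c'] bounds[OF sw(1)[unfolded p], of d']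
        bounds[OF sw(2)[unfolded p], of c] bounds[OF sw(2)[unfolded p], of d] by auto
    then show "p = p'" unfolding p by simp
  qed
qed

lemma three_le_nswitch:
  assumes "sign_switch D c0 d0 p1" "sign_switch D c0 d0 p2" "sign_switch D c0 d0 p3"
    and "p1 \<noteq> p2" "p1 \<noteq> p3" "p2 \<noteq> p3"
  shows "3 \<le> nswitch D c0 d0"
proof (cases "finite {p. sign_switch D c0 d0 p}")
  case True
  have "card {p1, p2, p3} \<le> card {p. sign_switch D c0 d0 p}"
    by (rule card_mono[OF True]) (use assms in auto)
  then show ?thesis
    unfolding nswitch_def using True assms by (simp add: numeral_eq_enat)
qed (simp add: nswitch_def)

lemma sign_switch_at_nonzero_derivative:
  fixes \<rho> Q D :: "real \<Rightarrow> real"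
  assumes z: "c0 < z" "z < d0" and Q: "\<And>x. x \<in> {c0..d0} \<Longrightarrow> Q x > 0"
    and D: "\<And>x. x \<in> {c0..d0} \<Longrightarrow> D x = Q x * (\<rho> x - \<rho> z)"
    and "(\<rho> has_real_derivative d) (at z)" "d \<noteq> 0"
  shows "sign_switch D c0 d0 (z, z)"
proof -
  obtain r where r: "r > 0" "\<And>h. 0 < h \<Longrightarrow> h < r \<Longrightarrow> (\<rho> (z - h) - \<rho> z) * (\<rho> (z + h) - \<rho> z) < 0"
    using sign_change_of_nonzero_derivative assms(5,6) by blast
  define \<delta> where "\<delta> = min (r / 2) (min (z - c0) (d0 - z))"
  have "D (z - h) * D (z + h) < 0" if "h \<in> {0<..\<delta>}" for h
  proof -
    have "D (z - h) * D (z + h) = (Q (z - h) * Q (z + h)) * ((\<rho> (z - h) - \<rho> z) * (\<rho> (z + h) - \<rho> z))"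
      using D[of "z - h"] D[of "z + h"] that unfolding \<delta>_def by auto
    moreover have "Q (z - h) * Q (z + h) > 0"
      using Q[of "z - h"] Q[of "z + h"] that unfolding \<delta>_def by auto
    moreover have "(\<rho> (z - h) - \<rho> z) * (\<rho> (z + h) - \<rho> z) < 0"
      using r that unfolding \<delta>_def by auto
    ultimately show ?thesis by (simp add: mult_pos_neg)
  qed
  moreover have "\<delta> > 0" using r z unfolding \<delta>_def by auto
  ultimately show ?thesis
    unfolding sign_switch_def using z D[of z] by (auto simp: \<delta>_def intro!: exI[of _ \<delta>])
qed

lemma three_le_nswitch_if_ratio_increases:
  fixes P Q :: "real \<Rightarrow> real"
  assumes cont: "continuous_on {c..d} P" "continuous_on {c..d} Q"
    and Q: "\<And>x. x \<in> {c..d} \<Longrightarrow> Q x > 0" and P: "\<And>x. x \<in> {c..d} \<Longrightarrow> 0 \<le> P x \<and> P x \<le> Q x"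
    and ends: "P c = Q c" "P d = 0"
    and K: "countable K" "\<And>x. x \<in> {c<..<d} - K \<Longrightarrow> P differentiable (at x) \<and> Q differentiable (at x)"
    and x12: "c \<le> x1" "x1 \<le> x2" "x2 \<le> d" "P x1 / Q x1 < P x2 / Q x2"
  shows "\<exists>b>0. 3 \<le> nswitch (\<lambda>x. P x - b * Q x) c d"
proof -
  define \<rho> where "\<rho> x = P x / Q x" for x
  have Q_ne: "Q x \<noteq> 0" if "c \<le> x" "x \<le> d" for x
    using Q[of x] that by auto
  have cont_\<rho>: "continuous_on {c..d} \<rho>"
    unfolding \<rho>_def by (intro continuous_intros cont) (use Q_ne in auto)
  have \<rho>_c: "\<rho> c = 1" and \<rho>_d: "\<rho> d = 0"
    using ends Q[of c] Q[of d] x12 unfolding \<rho>_def by auto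
  have \<rho>_range: "0 \<le> \<rho> x \<and> \<rho> x \<le> 1" if "x \<in> {c..d}" for x
    using P[OF that] Q[OF that] unfolding \<rho>_def by auto
  have diff_\<rho>: "\<rho> differentiable (at x)" if "x \<in> {c<..<d} - K" for x
    using K(2)[OF that] Q[of x] that unfolding \<rho>_def by (auto intro!: differentiable_divide)
  have "\<rho> x1 < \<rho> x2"
    using x12(4) unfolding \<rho>_def .
  obtain b where b: "\<rho> x1 < b" "b < \<rho> x2"
    and regular: "\<And>z. z \<in> {c<..<d} \<Longrightarrow> \<rho> z = b \<Longrightarrow>
      \<exists>d. (\<rho> has_real_derivative d) (at z) \<and> d \<noteq> 0"
    using regular_value_between[OF K(1) diff_\<rho> \<open>\<rho> x1 < \<rho> x2\<close>] by blast
  have b01: "0 < b" "b < 1"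
    using b \<rho>_range[of x1] \<rho>_range[of x2] x12 by auto
  have switch: "sign_switch (\<lambda>x. P x - b * Q x) c d (z, z)" if z: "c < z" "z < d" "\<rho> z = b" for z
  proof -
    obtain e where e: "(\<rho> has_real_derivative e) (at z)" "e \<noteq> 0"
      using regular[of z] z by auto
    show ?thesis
      by (rule sign_switch_at_nonzero_derivative[OF z(1,2) Q _ e])
         (use Q_ne z in \<open>auto simp: \<rho>_def field_simps\<close>)
  qed
  obtain z1 z2 z3 where "c < z1" "z1 < x1" "x1 < z2" "z2 < x2" "x2 < z3" "z3 < d"
    and "\<rho> z1 = b" "\<rho> z2 = b" "\<rho> z3 = b"
    using three_crossings[OF cont_\<rho> x12(1-3), of b] b b01 \<rho>_c \<rho>_d by auto
  then have "3 \<le> nswitch (\<lambda>x. P x - b * Q x) c d"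
    by (intro three_le_nswitch[OF switch[of z1] switch[of z2] switch[of z3]]) auto
  with b01 show ?thesis by auto
qed

lemma nswitch_ratio_dichotomy:
  fixes P Q :: "real \<Rightarrow> real"
  assumes "continuous_on {c..d} P" "continuous_on {c..d} Q"
    and Q: "\<And>x. x \<in> {c..d} \<Longrightarrow> Q x > 0" and "\<And>x. x \<in> {c..d} \<Longrightarrow> 0 \<le> P x \<and> P x \<le> Q x"
    and "P c = Q c" "P d = 0"
    and "countable K" "\<And>x. x \<in> {c<..<d} - K \<Longrightarrow> P differentiable (at x) \<and> Q differentiable (at x)"
  shows "(\<forall>b. nswitch (\<lambda>x. P x - b * Q x) c d \<le> 1) \<or> (\<exists>b>0. 3 \<le> nswitch (\<lambda>x. P x - b * Q x) c d)"
proof (cases "\<exists>x1 x2. c \<le> x1 \<and> x1 \<le> x2 \<and> x2 \<le> d \<and> P x1 / Q x1 < P x2 / Q x2")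
  case True
  then show ?thesis
    using three_le_nswitch_if_ratio_increases[OF assms] by blast
next
  case False
  have "nswitch (\<lambda>x. P x - b * Q x) c d \<le> 1" for b
  proof (rule nswitch_le_1_if_zeros_order_convex)
    fix x y z assume xyz: "c < x" "x \<le> z" "z \<le> y" "y < d"
      and zeros: "P x - b * Q x = 0" "P y - b * Q y = 0"
    have "P x / Q x = b" "P y / Q y = b"
      using zeros Q[of x] Q[of y] xyz by (auto simp: field_simps)
    moreover have "\<not> P x / Q x < P z / Q z" "\<not> P z / Q z < P y / Q y"
      using False xyz by auto
    ultimately have "P z / Q z = b" by linarith
    then show "P z - b * Q z = 0"
      using Q[of z] xyz by (auto simp: field_simps)
  qed
  then show ?thesis by blast
qed

lemma nswitch_dichotomy_swap:
  assumes "(\<forall>b. nswitch (\<lambda>x. Q x - b * P x) c d \<le> 1) \<or> (\<exists>b>0. 3 \<le> nswitch (\<lambda>x. Q x - b * P x) c d)"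
  shows "(\<forall>b>0. nswitch (\<lambda>x. P x - b * Q x) c d \<le> 1) \<or> (\<exists>b>0. 3 \<le> nswitch (\<lambda>x. P x - b * Q x) c d)"
proof -
  have swap: "nswitch (\<lambda>x. P x - b * Q x) c d = nswitch (\<lambda>x. Q x - (1 / b) * P x) c d" if "b > 0" for b
  proof -
    have "nswitch (\<lambda>x. P x - b * Q x) c d = nswitch (\<lambda>x. (- b) * (Q x - (1 / b) * P x)) c d"
      using that by (simp add: algebra_simps)
    also have "\<dots> = nswitch (\<lambda>x. Q x - (1 / b) * P x) c d"
      by (rule nswitch_cmult) (use that in simp)
    finally show ?thesis .
  qed
  from assms show ?thesis
  proof
    assume le_1: "\<forall>b. nswitch (\<lambda>x. Q x - b * P x) c d \<le> 1"
    have "nswitch (\<lambda>x. P x - b * Q x) c d \<le> 1" if "b > 0" for b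
      using swap[OF that] le_1[rule_format, of "1 / b"] by simp
    then show ?thesis by blast
  next
    assume "\<exists>b>0. 3 \<le> nswitch (\<lambda>x. Q x - b * P x) c d"
    then obtain b where "b > 0" "3 \<le> nswitch (\<lambda>x. Q x - (1 / (1 / b)) * P x) c d"
      by auto
    then show ?thesis
      using swap[of "1 / b"] by (intro disjI2 exI[of _ "1 / b"]) auto
  qed
qed

lemma
  assumes "Dbreve f"
  shows Dbreve_continuous_on: "continuous_on {0..1} f"
    and Dbreve_convex_on: "convex_on {0..1} f"
    and Dbreve_0: "f 0 = 1"
    and Dbreve_1: "f 1 = 0"
    and Dbreve_less: "x \<in> {0..1} \<Longrightarrow> y \<in> {0..1} \<Longrightarrow> x < y \<Longrightarrow> f y < f x"
    and Dbreve_nonneg: "x \<in> {0..1} \<Longrightarrow> 0 \<le> f x"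
    and Dbreve_le_1: "x \<in> {0..1} \<Longrightarrow> f x \<le> 1"
  using assms unfolding Dbreve_def by (auto simp: image_subset_iff)

lemma Dbreve_le:
  assumes "Dbreve f" "x \<in> {0..1}" "y \<in> {0..1}" "x \<le> y"
  shows "f y \<le> f x"
  using Dbreve_less[OF assms(1-3)] assms(4) by (cases "x = y") auto

lemma Dbreve_pos:
  assumes "Dbreve f" "0 \<le> x" "x < 1"
  shows "0 < f x"
  using Dbreve_less[OF assms(1), of x 1] Dbreve_1[OF assms(1)] assms(2,3) by simp

lemma Dbreve_integrable_on:
  assumes "Dbreve f" "0 \<le> a" "b \<le> 1"
  shows "f integrable_on {a..b}"
  by (rule integrable_continuous_interval, rule continuous_on_subset[OF Dbreve_continuous_on[OF assms(1)]])
     (use assms in auto)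

lemma int01_pos:
  assumes f: "Dbreve f"
  shows "int01 f > 0"
  unfolding int01_def using Dbreve_nonneg[OF f] Dbreve_0[OF f]
  by (intro integral_pos_if_continuous_nonneg[of 0 1 f 0] Dbreve_continuous_on[OF f]) auto

lemma Dbreve_image:
  assumes f: "Dbreve f"
  shows "f ` {0..1} = {0..1}"
proof
  show "f ` {0..1} \<subseteq> {0..1}"
    using Dbreve_nonneg[OF f] Dbreve_le_1[OF f] by auto
  show "{0..1} \<subseteq> f ` {0..1}"
  proof
    fix t :: real assume "t \<in> {0..1}"
    then obtain x where "0 \<le> x" "x \<le> 1" "f x = t"
      using IVT2'[of f 1 t 0] Dbreve_continuous_on[OF f] Dbreve_0[OF f] Dbreve_1[OF f] by auto
    then show "t \<in> f ` {0..1}" by auto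
  qed
qed

lemma Dbreve_inj_on:
  assumes f: "Dbreve f"
  shows "inj_on f {0..1}"
  by (rule inj_onI) (metis Dbreve_less[OF f] linorder_neq_iff order.irrefl)

lemma
  assumes f: "Dbreve f"
  shows finv_in: "t \<in> {0..1} \<Longrightarrow> finv f t \<in> {0..1}"
    and f_finv: "t \<in> {0..1} \<Longrightarrow> f (finv f t) = t"
    and finv_f: "y \<in> {0..1} \<Longrightarrow> finv f (f y) = y"
  unfolding finv_def
  using Dbreve_image[OF f] Dbreve_inj_on[OF f] by (metis inv_into_into f_inv_into_f inv_into_f_f)+

lemma continuous_on_finv:
  assumes f: "Dbreve f"
  shows "continuous_on {0..1} (finv f)"
proof -
  have "continuous_on (f ` {0..1}) (finv f)"
    by (rule continuous_on_inv[OF Dbreve_continuous_on[OF f] compact_Icc]) (simp add: finv_f[OF f])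
  then show ?thesis
    using Dbreve_image[OF f] by simp
qed

lemma integral_half_square_gap_le:
  assumes ft: "Dbreve ft" and f: "Dbreve f" and g: "Dbreve g" and c: "c \<ge> 1"
    and below: "\<And>y. y \<in> {0..1} \<Longrightarrow> ft y \<le> f y \<and> ft y \<le> g (y / c)"
  shows "integral {0..1} (\<lambda>y. (f y)\<^sup>2 / 2) - integral {0..1} (\<lambda>y. (g (y / c))\<^sup>2 / 2)
    \<le> int01 f - int01 ft"
proof -
  have scaled: "y / c \<in> {0..1}" if "y \<in> {0..1}" for y
    using that c by (auto simp: divide_le_eq)
  have "continuous_on {0..1} (\<lambda>y. g (y / c))"
    by (rule continuous_on_compose2[OF Dbreve_continuous_on[OF g]])
       (use c scaled in \<open>auto intro!: continuous_intros\<close>)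
  note cont = Dbreve_continuous_on[OF f] Dbreve_continuous_on[OF ft] this
  have "integral {0..1} (\<lambda>y. (f y)\<^sup>2 / 2 - (g (y / c))\<^sup>2 / 2) \<le> integral {0..1} (\<lambda>y. f y - ft y)"
    using half_square_diff_le Dbreve_nonneg[OF f] Dbreve_le_1[OF f] Dbreve_nonneg[OF g] Dbreve_le_1[OF g]
      scaled below
    by (intro integral_le integrable_continuous_interval continuous_intros cont) auto
  then show ?thesis
    unfolding int01_def
    by (simp add: Henstock_Kurzweil_Integration.integral_diff integrable_continuous_interval
        continuous_intros cont)
qed

lemma integral_dilated_half_square_less:
  assumes g: "Dbreve g" and c: "c > 1"
  shows "integral {0..1} (\<lambda>x. (g (x / c))\<^sup>2 / 2) < c * integral {0..1} (\<lambda>y. (g y)\<^sup>2 / 2)"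
proof -
  define h where "h x = (g (x / c))\<^sup>2 / 2" for x
  have h_cont: "continuous_on {0..c} h"
    unfolding h_def using c
    by (intro continuous_intros continuous_on_compose2[OF Dbreve_continuous_on[OF g]]) auto
  have "c * integral {0..1} (\<lambda>y. (g y)\<^sup>2 / 2) = integral {0..c} h"
    unfolding h_def using c
    by (intro integral_dilate_unit_interval[symmetric] integrable_continuous_interval continuous_intros
        Dbreve_continuous_on[OF g]) auto
  also have "\<dots> = integral {0..1} h + integral {1..c} h"
    using c h_cont
    by (intro Henstock_Kurzweil_Integration.integral_combine[symmetric] integrable_continuous_interval) auto
  finally have "c * integral {0..1} (\<lambda>y. (g y)\<^sup>2 / 2) = integral {0..1} h + integral {1..c} h" .
  moreover have "integral {1..c} h > 0"
    using c h_cont Dbreve_pos[OF g, of "1 / c"] unfolding h_def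
    by (intro integral_pos_if_continuous_nonneg[of 1 c _ 1]) (auto elim: continuous_on_subset)
  ultimately show ?thesis
    unfolding h_def by simp
qed

section \<open>Crossing number of a function with itself\<close>

lemma crossing_cong:
  assumes "\<And>x. x \<in> {0..1} \<Longrightarrow> g x = g' x"
  shows "crossing f g = crossing f g'"
proof -
  have "nswitch (\<lambda>x. f (a * x) - b * g x) 0 (min 1 (1 / a)) =
        nswitch (\<lambda>x. f (a * x) - b * g' x) 0 (min 1 (1 / a))" for a b
    by (rule nswitch_cong) (use assms in auto)
  then show ?thesis unfolding crossing_def by simp
qed

lemma Dbreve_dilation_differentiable:
  assumes f: "Dbreve f" and a: "a > 0"
  obtains K where "countable K"
    and "\<And>x. x \<in> {0<..<1} - K \<Longrightarrow> a * x < 1 \<Longrightarrow>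
      f differentiable (at x) \<and> (\<lambda>x. f (a * x)) differentiable (at x)"
proof
  define N where "N = {x\<in>{0<..<1}. \<not> f differentiable (at x)}"
  have "countable N"
    unfolding N_def by (rule countable_nondifferentiable_convex_on[OF Dbreve_convex_on[OF f]])
  then show "countable (N \<union> (\<lambda>y. y / a) ` N)" by auto
  fix x assume x: "x \<in> {0<..<1} - (N \<union> (\<lambda>y. y / a) ` N)" "a * x < 1"
  then have "a * x \<in> {0<..<1}" "a * x \<notin> N"
    using a by (auto simp: field_simps image_iff)
  then have "f differentiable (at (a * x))"
    unfolding N_def by auto
  then have "(\<lambda>x. f (a * x)) differentiable (at x)"
    using differentiable_chain_at[of "\<lambda>x. a * x" x f] by (simp add: o_def)
  moreover have "f differentiable (at x)"
    using x unfolding N_def by auto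
  ultimately show "f differentiable (at x) \<and> (\<lambda>x. f (a * x)) differentiable (at x)" by simp
qed

lemma nswitch_dilation_gt_1:
  assumes f: "Dbreve f" and a: "a > 1"
  shows "(\<forall>b. nswitch (\<lambda>x. f (a * x) - b * f x) 0 (1 / a) \<le> 1) \<or>
         (\<exists>b>0. 3 \<le> nswitch (\<lambda>x. f (a * x) - b * f x) 0 (1 / a))"
proof -
  obtain K where K: "countable K" "\<And>x. x \<in> {0<..<1} - K \<Longrightarrow> a * x < 1 \<Longrightarrow>
      f differentiable (at x) \<and> (\<lambda>x. f (a * x)) differentiable (at x)"
    using Dbreve_dilation_differentiable[OF f, of a] a by auto
  have "1 / a < 1"
    using a by simp
  have range: "a * x \<in> {0..1}" "x \<in> {0..1}" "x \<le> a * x" if "x \<in> {0..1 / a}" for x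
  proof -
    have "0 \<le> x" "a * x \<le> 1"
      using that a by (auto simp: field_simps)
    moreover have "x \<le> a * x"
      using mult_right_mono[of 1 a x] a \<open>0 \<le> x\<close> by simp
    ultimately show "a * x \<in> {0..1}" "x \<in> {0..1}" "x \<le> a * x" by auto
  qed
  show ?thesis
  proof (rule nswitch_ratio_dichotomy[OF _ _ _ _ _ _ K(1)])
    show "continuous_on {0..1 / a} (\<lambda>x. f (a * x))"
      by (rule continuous_on_compose2[OF Dbreve_continuous_on[OF f]]) (use range(1) in \<open>auto intro!: continuous_intros\<close>)
    show "continuous_on {0..1 / a} f"
      by (rule continuous_on_subset[OF Dbreve_continuous_on[OF f]]) (use range in auto)
    show "f x > 0" if "x \<in> {0..1 / a}" for x
      using Dbreve_pos[OF f, of x] that \<open>1 / a < 1\<close> by auto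
    show "0 \<le> f (a * x) \<and> f (a * x) \<le> f x" if "x \<in> {0..1 / a}" for x
      using Dbreve_nonneg[OF f] Dbreve_le[OF f] range[OF that] by auto
    show "f (a * 0) = f 0" "f (a * (1 / a)) = 0"
      using a Dbreve_1[OF f] by auto
    show "(\<lambda>x. f (a * x)) differentiable (at x) \<and> f differentiable (at x)" if "x \<in> {0<..<1 / a} - K" for x
    proof -
      have "a * x < 1"
        using that a by (auto simp: field_simps)
      moreover have "x < 1"
        using that \<open>1 / a < 1\<close> by auto
      ultimately show ?thesis
        using K(2)[of x] that by auto
    qed
  qed
qed

lemma nswitch_dilation_lt_1:
  assumes f: "Dbreve f" and a: "0 < a" "a < 1"
  shows "(\<forall>b>0. nswitch (\<lambda>x. f (a * x) - b * f x) 0 1 \<le> 1) \<or>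
         (\<exists>b>0. 3 \<le> nswitch (\<lambda>x. f (a * x) - b * f x) 0 1)"
proof -
  obtain K where K: "countable K" "\<And>x. x \<in> {0<..<1} - K \<Longrightarrow> a * x < 1 \<Longrightarrow>
      f differentiable (at x) \<and> (\<lambda>x. f (a * x)) differentiable (at x)"
    using Dbreve_dilation_differentiable[OF f a(1)] by auto
  have range: "a * x \<in> {0..1}" "a * x < 1" "a * x \<le> x" if "x \<in> {0..1}" for x
  proof -
    have "0 \<le> a * x" "a * x \<le> a" "a * x \<le> x"
      using that a mult_left_mono[of x 1 a] mult_right_mono[of a 1 x] by auto
    then show "a * x \<in> {0..1}" "a * x < 1" "a * x \<le> x"
      using a unfolding atLeastAtMost_iff by linarith+
  qed
  show ?thesis
  proof (rule nswitch_dichotomy_swap, rule nswitch_ratio_dichotomy[OF _ _ _ _ _ _ K(1)])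
    show "continuous_on {0..1} (\<lambda>x. f (a * x))"
      by (rule continuous_on_compose2[OF Dbreve_continuous_on[OF f]]) (use range(1) in \<open>auto intro!: continuous_intros\<close>)
    show "f (a * x) > 0" if "x \<in> {0..1}" for x
      using Dbreve_pos[OF f] range[OF that] by auto
    show "0 \<le> f x \<and> f x \<le> f (a * x)" if "x \<in> {0..1}" for x
      using Dbreve_nonneg[OF f] Dbreve_le[OF f] range[OF that] that by auto
  qed (use K(2) range Dbreve_continuous_on[OF f] Dbreve_1[OF f] in auto)
qed

lemma nswitch_dilation_dichotomy:
  assumes f: "Dbreve f" and a: "a > 0"
  shows "(\<forall>b>0. nswitch (\<lambda>x. f (a * x) - b * f x) 0 (min 1 (1 / a)) \<le> 1) \<or>
         (\<exists>b>0. 3 \<le> nswitch (\<lambda>x. f (a * x) - b * f x) 0 (min 1 (1 / a)))"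
proof -
  consider "a = 1" | "a > 1" | "a < 1" by linarith
  then show ?thesis
  proof cases
    case 1
    have "nswitch (\<lambda>x. f x - b * f x) 0 1 \<le> 1" for b
    proof (rule nswitch_le_1_if_zeros_order_convex)
      fix x y z :: real assume "0 < x" "x \<le> z" "z \<le> y" "y < 1" "f x - b * f x = 0"
      then have "b = 1"
        using Dbreve_pos[OF f, of x] by (auto simp: algebra_simps)
      then show "f z - b * f z = 0" by simp
    qed
    then show ?thesis using 1 by simp
  next
    case 2
    then show ?thesis using nswitch_dilation_gt_1[OF f 2] by auto
  next
    case 3
    then show ?thesis using nswitch_dilation_lt_1[OF f a] a by simp
  qed
qed

lemma crossing_self_ne_2:
  assumes "Dbreve f"
  shows "crossing f f \<noteq> 2"
proof
  assume two: "crossing f f = 2"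
  define N where "N a b = nswitch (\<lambda>x. f (a * x) - b * f x) 0 (min 1 (1 / a))" for a b
  have crossing: "crossing f f = (SUP p\<in>{p. fst p > 0 \<and> snd p > 0}. N (fst p) (snd p))"
    unfolding crossing_def N_def by simp
  have "N a b \<le> 1" if "a > 0" "b > 0" for a b
  proof -
    have "N a b' \<le> 2" if "b' > 0" for b'
      unfolding two[symmetric] crossing using \<open>a > 0\<close> that by (intro SUP_upper2[of "(a, b')"]) auto
    then have "\<not> 3 \<le> N a b'" if "b' > 0" for b'
      using that order.trans[of 3 "N a b'" 2] by (force simp: numeral_eq_enat)
    then show ?thesis
      using nswitch_dilation_dichotomy[OF assms \<open>a > 0\<close>] \<open>b > 0\<close> unfolding N_def by blast
  qed
  then have "crossing f f \<le> 1"
    unfolding crossing by (intro SUP_least) auto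
  with two show False by (simp add: one_enat_def numeral_eq_enat)
qed

lemma int01_less_if_dominated:
  assumes f: "Dbreve f" and g: "Dbreve g" and "dominated g f"
  shows "int01 g < int01 f"
proof -
  have le: "g x \<le> f x" if "x \<in> {0..1}" for x
    using assms(3) that unfolding dominated_def by auto
  have "\<exists>x0\<in>{0..1}. g x0 \<noteq> f x0"
  proof (rule ccontr)
    assume "\<not> ?thesis"
    then have "crossing f g = crossing f f"
      by (intro crossing_cong) auto
    then show False
      using crossing_self_ne_2[OF f] assms(3) unfolding dominated_def by simp
  qed
  then obtain x0 where "x0 \<in> {0..1}" "g x0 < f x0"
    using le by force
  then have "integral {0..1} (\<lambda>x. f x - g x) > 0"
    using le by (intro integral_pos_if_continuous_nonneg[of 0 1 _ x0] continuous_intros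
        Dbreve_continuous_on[OF f] Dbreve_continuous_on[OF g]) auto
  then show ?thesis
    unfolding int01_def
    using Henstock_Kurzweil_Integration.integral_diff[OF Dbreve_integrable_on[OF f] Dbreve_integrable_on[OF g]]
    by simp
qed

section \<open>The operator T\<close>

lemma Dbreve_integral_increment:
  assumes f: "Dbreve f" and t: "t \<in> {0..1}" "t' \<in> {0..1}"
  shows "\<bar>integral {0..t'} f - integral {0..t} f - f t' * (t' - t)\<bar> \<le> \<bar>f t' - f t\<bar> * \<bar>t' - t\<bar>"
proof -
  have split: "integral {0..v} f = integral {0..u} f + integral {u..v} f" if "u \<in> {0..1}" "v \<in> {0..1}" "u \<le> v" for u v
    using Henstock_Kurzweil_Integration.integral_combine[OF _ _ Dbreve_integrable_on[OF f, of 0 v]] that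
    by auto
  have deviation: "\<bar>integral {u..v} f - f w * (v - u)\<bar> \<le> (f u - f v) * (v - u)"
    if "u \<in> {0..1}" "v \<in> {0..1}" "u \<le> v" "w \<in> {u, v}" for u v w
    using that by (intro integral_deviation_le Dbreve_integrable_on[OF f])
      (auto intro: Dbreve_le[OF f])
  show ?thesis
  proof (cases "t \<le> t'")
    case True
    with split[of t t'] deviation[of t t' t'] t Dbreve_le[OF f, of t t'] show ?thesis
      by (simp add: abs_mult)
  next
    case False
    with split[of t' t] deviation[of t' t t'] t Dbreve_le[OF f, of t' t] show ?thesis
      by (simp add: abs_mult abs_minus_commute algebra_simps)
  qed
qed

lemma integral_pos_part_eq:
  assumes f: "Dbreve f" and x: "x \<in> {0..1}"
  shows "integral {0..1} (\<lambda>y. max (f y - x) 0) = integral {0..finv f x} f - x * finv f x"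
proof -
  define s where "s = finv f x"
  have s: "0 \<le> s" "s \<le> 1" "f s = x"
    using finv_in[OF f x] f_finv[OF f x] unfolding s_def by auto
  have "integral {0..1} (\<lambda>y. max (f y - x) 0) =
      integral {0..s} (\<lambda>y. max (f y - x) 0) + integral {s..1} (\<lambda>y. max (f y - x) 0)"
    using s by (intro Henstock_Kurzweil_Integration.integral_combine[symmetric]
        integrable_continuous_interval continuous_intros Dbreve_continuous_on[OF f]) auto
  also have "integral {0..s} (\<lambda>y. max (f y - x) 0) = integral {0..s} (\<lambda>y. f y - x)"
    using s Dbreve_le[OF f] by (intro integral_cong) force
  also have "integral {s..1} (\<lambda>y. max (f y - x) 0) = 0"
    using s Dbreve_le[OF f] by (subst integral_cong[of _ _ "\<lambda>_. 0"]) force+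
  also have "integral {0..s} (\<lambda>y. f y - x) = integral {0..s} f - x * s"
    using s by (subst Henstock_Kurzweil_Integration.integral_diff[OF Dbreve_integrable_on[OF f]
        integrable_const_ivl]) auto
  finally show ?thesis unfolding s_def by simp
qed

lemma pos_part_integral_increment:
  assumes f: "Dbreve f" and x: "x \<in> {0..1}" "x' \<in> {0..1}"
  defines "\<Phi> \<equiv> \<lambda>x. integral {0..1} (\<lambda>y. max (f y - x) 0)"
  shows "\<bar>\<Phi> x' - \<Phi> x + (x' - x) * finv f x\<bar> \<le> \<bar>x' - x\<bar> * \<bar>finv f x' - finv f x\<bar>"
proof -
  have "\<Phi> x' - \<Phi> x + (x' - x) * finv f x =
      integral {0..finv f x'} f - integral {0..finv f x} f - f (finv f x') * (finv f x' - finv f x)"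
    unfolding \<Phi>_def integral_pos_part_eq[OF f x(1)] integral_pos_part_eq[OF f x(2)] f_finv[OF f x(2)]
    by (simp add: algebra_simps)
  also have "\<bar>\<dots>\<bar> \<le> \<bar>x' - x\<bar> * \<bar>finv f x' - finv f x\<bar>"
    using Dbreve_integral_increment[OF f finv_in[OF f x(1)] finv_in[OF f x(2)]]
    unfolding f_finv[OF f x(1)] f_finv[OF f x(2)] .
  finally show ?thesis .
qed

lemma has_real_derivative_pos_part_integral:
  assumes f: "Dbreve f" and x: "x \<in> {0..1}"
  shows "((\<lambda>x. integral {0..1} (\<lambda>y. max (f y - x) 0)) has_real_derivative - finv f x) (at x within {0..1})"
proof -
  define \<Phi> where "\<Phi> x = integral {0..1} (\<lambda>y. max (f y - x) 0)" for x
  have "((\<lambda>y. (\<Phi> y - \<Phi> x) / (y - x) + finv f x) \<longlongrightarrow> 0) (at x within {0..1})"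
  proof (rule Lim_null_comparison)
    show "\<forall>\<^sub>F y in at x within {0..1}. norm ((\<Phi> y - \<Phi> x) / (y - x) + finv f x) \<le> \<bar>finv f y - finv f x\<bar>"
      unfolding eventually_at_filter
    proof (intro always_eventually allI impI)
      fix y assume y: "y \<noteq> x" "y \<in> {0..1}"
      have "(\<Phi> y - \<Phi> x) / (y - x) + finv f x = (\<Phi> y - \<Phi> x + (y - x) * finv f x) / (y - x)"
        using y by (simp add: field_simps)
      then show "norm ((\<Phi> y - \<Phi> x) / (y - x) + finv f x) \<le> \<bar>finv f y - finv f x\<bar>"
        using pos_part_integral_increment[OF f x y(2)] y
        by (simp add: \<Phi>_def abs_divide divide_le_eq mult.commute)
    qed
    have "(finv f \<longlongrightarrow> finv f x) (at x within {0..1})"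
      using continuous_on_finv[OF f] x by (simp add: continuous_on_def)
    then show "((\<lambda>y. \<bar>finv f y - finv f x\<bar>) \<longlongrightarrow> 0) (at x within {0..1})"
      by (intro tendsto_rabs_zero) (simp add: Lim_null[symmetric])
  qed
  then have "((\<lambda>y. ((\<Phi> y - \<Phi> x) / (y - x) + finv f x) - finv f x) \<longlongrightarrow> 0 - finv f x) (at x within {0..1})"
    by (intro tendsto_diff tendsto_const)
  then show ?thesis
    by (simp add: has_field_derivative_iff \<Phi>_def[abs_def])
qed

lemma integral_finv_eq_pos_part:
  assumes f: "Dbreve f" and x: "x \<in> {0..1}"
  shows "integral {x..1} (finv f) = integral {0..1} (\<lambda>y. max (f y - x) 0)"
proof -
  define \<Phi> where "\<Phi> x = integral {0..1} (\<lambda>y. max (f y - x) 0)" for x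
  have "((\<lambda>t. - finv f t) has_integral \<Phi> 1 - \<Phi> x) {x..1}"
  proof (rule fundamental_theorem_of_calculus)
    show "x \<le> 1" using x by simp
    fix t assume "t \<in> {x..1}"
    then have "(\<Phi> has_real_derivative - finv f t) (at t within {0..1})"
      unfolding \<Phi>_def using has_real_derivative_pos_part_integral[OF f] x by auto
    then show "(\<Phi> has_vector_derivative - finv f t) (at t within {x..1})"
      using x by (auto simp flip: has_real_derivative_iff_has_vector_derivative
          intro: has_field_derivative_subset)
  qed
  moreover have "\<Phi> 1 = 0"
    unfolding \<Phi>_def using Dbreve_le_1[OF f] by (subst integral_cong[of _ _ "\<lambda>_. 0"]) auto
  ultimately have "(finv f has_integral \<Phi> x) {x..1}"
    using has_integral_neg[of "\<lambda>t. - finv f t" "- \<Phi> x" "{x..1}"] by simp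
  then show ?thesis
    unfolding \<Phi>_def by (rule integral_unique)
qed

lemma int01_Top:
  assumes f: "Dbreve f"
  shows "int01 (Top f) = integral {0..1} (\<lambda>y. (f y)\<^sup>2 / 2) / int01 f"
proof -
  have "int01 (Top f) = integral {0..1} (\<lambda>x. integral {x..1} (finv f)) / int01 f"
    unfolding int01_def Top_def by simp
  also have "integral {0..1} (\<lambda>x. integral {x..1} (finv f)) =
      integral {0..1} (\<lambda>x. integral {0..1} (\<lambda>y. max (f y - x) 0))"
    using integral_finv_eq_pos_part[OF f] by (intro integral_cong) auto
  also have "integral {0..1} (\<lambda>x. integral {0..1} (\<lambda>y. max (f y - x) 0)) =
      integral {0..1} (\<lambda>y. integral {0..1} (\<lambda>x. max (f y - x) 0))"
  proof -
    have "continuous_on ({0..1} \<times> {0..1}) (\<lambda>p. max (f (snd p) - fst p) 0)"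
      by (intro continuous_intros continuous_on_compose2[OF Dbreve_continuous_on[OF f]]) auto
    then show ?thesis
      using integral_swap_continuous[of 0 0 1 1 "\<lambda>x y. max (f y - x) 0"]
      by (simp add: cbox_Pair_eq case_prod_beta)
  qed
  also have "\<dots> = integral {0..1} (\<lambda>y. (f y)\<^sup>2 / 2)"
    using Dbreve_nonneg[OF f] Dbreve_le_1[OF f] by (intro integral_cong integral_max_diff_0) auto
  finally show ?thesis .
qed

theorem lemma4p6:
  fixes ft f g :: "real \<Rightarrow> real"
  assumes "Dbreve ft" and "Dbreve f" and "Dbreve g"
    and "dominated g f"
    and "\<forall>x\<in>{0..1}. ft x \<le> f x"
    and "\<forall>x\<in>{0..1}. ft x \<le> g (x / (int01 f / int01 g))"
  shows "int01 (Top f) - int01 (Top g) < 1 - int01 ft / int01 f"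
proof -
  define c where "c = int01 f / int01 g"
  have pos: "int01 f > 0" "int01 g > 0" and "c > 1"
    using int01_pos assms(2,3) int01_less_if_dominated[OF assms(2-4)] unfolding c_def by auto
  have "int01 (Top f) - int01 (Top g) =
      (integral {0..1} (\<lambda>y. (f y)\<^sup>2 / 2) - c * integral {0..1} (\<lambda>y. (g y)\<^sup>2 / 2)) / int01 f"
    using pos unfolding int01_Top[OF assms(2)] int01_Top[OF assms(3)] c_def by (simp add: field_simps)
  also have "\<dots> < (int01 f - int01 ft) / int01 f"
    using integral_half_square_gap_le[OF assms(1-3), of c] assms(5,6) \<open>c > 1\<close>
      integral_dilated_half_square_less[OF assms(3) \<open>c > 1\<close>] pos
    by (intro divide_strict_right_mono) (auto simp: c_def)
  also have "\<dots> = 1 - int01 ft / int01 f"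
    using pos by (simp add: field_simps)
  finally show ?thesis .
qed

end
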